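(* For every integer $t\ge 2$, Waiter wins the $(1:1)$ Client-Waiter vertex $K_3$-game played on the graph $DD_t$.
   Context: For $t\ge 2$, $DD_t$ is the graph obtained as follows: take triangles $a_ib_ic_i$ for $i=1,\dots,t$ on vertices where $c_i=a_{i+1}$ for $1\le i<t$ and all other listed vertices are distinct (a chain of $t$ triangles, consecutive ones sharing exactly one vertex, nonconsecutive ones disjoint), and add two new vertices $x,y$ together with the triangles $a_1c_1y$ and $a_tc_tx$ (i.e., edges $ya_1,yc_1,xa_t,xc_t$). The $(1:1)$ Client-Waiter vertex $K_3$-game on a graph: in each round Waiter offers one or two unclaimed vertices, Client claims one and Waiter the other (if any); Client wins if the subgraph induced by his vertices contains a triangle, otherwise Waiter wins. *)

theory Defs
  imports Main
begin

definition has_triangle :: "('a \<Rightarrow> 'a \<Rightarrow> bool) \<Rightarrow> 'a set \<Rightarrow> bool" where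
  "has_triangle E S \<longleftrightarrow>
     (\<exists>a\<in>S. \<exists>b\<in>S. \<exists>c\<in>S. a \<noteq> b \<and> b \<noteq> c \<and> a \<noteq> c \<and> E a b \<and> E b c \<and> E a c)"

text \<open>waiter_wins E C U: in the position where Client has claimed the set C and
  U is the set of still unclaimed vertices, Waiter has a strategy guaranteeing that
  the subgraph induced by Client's vertices at the end of the game contains no
  triangle. In each round Waiter offers one or two unclaimed vertices; Client picks
  one of them, and Waiter gets the other one (if any). Waiter's own vertices play no role for the winning condition.\<close>

inductive waiter_wins :: "('a \<Rightarrow> 'a \<Rightarrow> bool) \<Rightarrow> 'a set \<Rightarrow> 'a set \<Rightarrow> bool"
  for E :: "'a \<Rightarrow> 'a \<Rightarrow> bool" where
  finish: "\<not> has_triangle E C \<Longrightarrow> waiter_wins E C {}"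
| offer_one: "v \<in> U \<Longrightarrow> waiter_wins E (insert v C) (U - {v}) \<Longrightarrow> waiter_wins E C U"
| offer_two: "v \<in> U \<Longrightarrow> w \<in> U \<Longrightarrow> v \<noteq> w
     \<Longrightarrow> waiter_wins E (insert v C) (U - {v, w})
     \<Longrightarrow> waiter_wins E (insert w C) (U - {v, w})
     \<Longrightarrow> waiter_wins E C U"

definition waiter_wins_game :: "'a set \<Rightarrow> ('a \<Rightarrow> 'a \<Rightarrow> bool) \<Rightarrow> bool" where
  "waiter_wins_game V E \<longleftrightarrow> waiter_wins E {} V"

text \<open>Vertices: Ch i for i = 0..t is the chain vertex with a_i = Ch (i-1), c_i = Ch i
  (so c_i = a_(i+1)); Tp i for i = 1..t is b_i; X and Y are the two extra vertices.\<close>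

datatype ddv = Ch nat | Tp nat | X | Y

definition DD_verts :: "nat \<Rightarrow> ddv set" where
  "DD_verts t = Ch ` {0..t} \<union> Tp ` {1..t} \<union> {X, Y}"

definition DD_edge0 :: "nat \<Rightarrow> ddv \<Rightarrow> ddv \<Rightarrow> bool" where
  "DD_edge0 t u v \<longleftrightarrow>
     (\<exists>i\<in>{1..t}. (u = Ch (i - 1) \<and> v = Tp i) \<or> (u = Tp i \<and> v = Ch i)
                  \<or> (u = Ch (i - 1) \<and> v = Ch i))
     \<or> (u = Y \<and> v = Ch 0) \<or> (u = Y \<and> v = Ch 1)
     \<or> (u = X \<and> v = Ch (t - 1)) \<or> (u = X \<and> v = Ch t)"

definition DD_edge :: "nat \<Rightarrow> ddv \<Rightarrow> ddv \<Rightarrow> bool" where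
  "DD_edge t u v \<longleftrightarrow> DD_edge0 t u v \<or> DD_edge0 t v u"

end

theory Submission
  imports Defs
begin

text \<open>Waiter first offers x and y. The reflection of DD_t that swaps x and y and reverses
  the chain is an automorphism, so we may assume Client takes y. Every edge of DD_t has an
  endpoint on the chain, so every triangle contains two consecutive chain vertices a_k, c_k
  and one of their common neighbours; hence the only triangles are a_k b_k c_k, a_1 c_1 y
  and a_t c_t x. Waiter now gives b_1 to Client and offers the remaining vertices in pairs
  {a_1, c_1} and {b_k, c_k} (k \<ge> 2), each of which blocks one of these triangles.\<close>

definition pair_vertices :: "('a \<times> 'a) list \<Rightarrow> 'a set" where
  "pair_vertices ps = (\<Union>(a, b)\<in>set ps. {a, b})"

fun disjoint_pairs :: "('a \<times> 'a) list \<Rightarrow> bool" where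
  "disjoint_pairs [] \<longleftrightarrow> True"
| "disjoint_pairs ((a, b) # ps) \<longleftrightarrow>
     a \<noteq> b \<and> a \<notin> pair_vertices ps \<and> b \<notin> pair_vertices ps \<and> disjoint_pairs ps"

definition transversal :: "('a \<times> 'a) list \<Rightarrow> 'a set \<Rightarrow> bool" where
  "transversal ps S \<longleftrightarrow> S \<subseteq> pair_vertices ps \<and> (\<forall>(a, b)\<in>set ps. a \<in> S \<longleftrightarrow> b \<notin> S)"

lemma pair_vertices_Nil [simp]: "pair_vertices [] = {}"
  by (simp add: pair_vertices_def)

lemma pair_vertices_Cons [simp]:
  "pair_vertices ((a, b) # ps) = insert a (insert b (pair_vertices ps))"
  by (auto simp: pair_vertices_def)

lemma pair_vertices_map:
  "pair_vertices (map (\<lambda>x. (f x, g x)) xs) = f ` set xs \<union> g ` set xs"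
  by (auto simp: pair_vertices_def)

lemma disjoint_pairs_map:
  assumes "distinct xs" "inj f" "inj g" "\<And>x y. f x \<noteq> g y"
  shows "disjoint_pairs (map (\<lambda>x. (f x, g x)) xs)"
  using assms by (induction xs) (auto simp: pair_vertices_map inj_eq, metis)

lemma transversal_Cons:
  assumes "disjoint_pairs ((a, b) # ps)" and "transversal ps S"
  shows "transversal ((a, b) # ps) (insert a S)" and "transversal ((a, b) # ps) (insert b S)"
  using assms by (auto simp: transversal_def pair_vertices_def)

lemma waiter_wins_pairing:
  assumes "disjoint_pairs ps"
    and "\<And>S. transversal ps S \<Longrightarrow> \<not> has_triangle E (C \<union> S)"
  shows "waiter_wins E C (pair_vertices ps)"
  using assms
proof (induction ps arbitrary: C)
  case Nil
  have "transversal [] {}" by (simp add: transversal_def)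
  with Nil.prems(2) have "\<not> has_triangle E C" by fastforce
  then show ?case by (simp add: waiter_wins.finish)
next
  case (Cons p ps)
  obtain a b where p: "p = (a, b)" by fastforce
  have disj: "a \<noteq> b" "a \<notin> pair_vertices ps" "b \<notin> pair_vertices ps" "disjoint_pairs ps"
    using Cons.prems(1) p by auto
  have "waiter_wins E (insert x C) (pair_vertices ps)" if "x \<in> {a, b}" for x
  proof (rule Cons.IH[OF disj(4)])
    fix S assume "transversal ps S"
    then have "transversal (p # ps) (insert x S)"
      using transversal_Cons[OF Cons.prems(1)[unfolded p]] that unfolding p by blast
    then show "\<not> has_triangle E (insert x C \<union> S)"
      using Cons.prems(2) by fastforce
  qed
  moreover have "pair_vertices (p # ps) - {a, b} = pair_vertices ps"
    using disj p by auto
  ultimately show ?case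
    using waiter_wins.offer_two[of a "pair_vertices (p # ps)" b] disj p by auto
qed

lemma has_triangle_image:
  assumes "inj_on f C" and "\<And>a b. a \<in> C \<Longrightarrow> b \<in> C \<Longrightarrow> E' (f a) (f b) \<longleftrightarrow> E a b"
  shows "has_triangle E' (f ` C) \<longleftrightarrow> has_triangle E C"
  using assms unfolding has_triangle_def inj_on_def by (smt (verit) imageE imageI)

lemma waiter_wins_image:
  assumes "waiter_wins E C U" and "inj_on f (C \<union> U)"
    and "\<And>a b. a \<in> C \<union> U \<Longrightarrow> b \<in> C \<union> U \<Longrightarrow> E' (f a) (f b) \<longleftrightarrow> E a b"
  shows "waiter_wins E' (f ` C) (f ` U)"
  using assms
proof (induction rule: waiter_wins.induct)
  case (finish C)
  then show ?case
    using has_triangle_image[of f C E' E] by (auto intro: waiter_wins.finish)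
next
  case (offer_one v U C)
  have "insert v C \<union> (U - {v}) = C \<union> U" using offer_one.hyps(1) by blast
  moreover have "f ` (U - {v}) = f ` U - {f v}"
    using offer_one.prems(1) offer_one.hyps(1) by (auto simp: inj_on_def)
  ultimately show ?case
    using offer_one by (auto intro: waiter_wins.offer_one)
next
  case (offer_two v U w C)
  have "waiter_wins E' (f ` insert x C) (f ` (U - {v, w}))" if "x \<in> {v, w}" for x
  proof -
    have sub: "insert x C \<union> (U - {v, w}) \<subseteq> C \<union> U"
      using offer_two.hyps(1,2) that by blast
    show ?thesis
      using that offer_two.IH inj_on_subset[OF offer_two.prems(1) sub] offer_two.prems(2) sub
      by blast
  qed
  moreover have "f ` (U - {v, w}) = f ` U - {f v, f w}" and "f v \<noteq> f w"
    using offer_two.prems(1) offer_two.hyps(1-3) by (auto simp: inj_on_def)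
  ultimately show ?case
    using offer_two.hyps(1,2) waiter_wins.offer_two[of "f v" "f ` U" "f w" E' "f ` C"] by simp
qed

lemma DD_edge_sym: "DD_edge t u v \<longleftrightarrow> DD_edge t v u"
  by (auto simp: DD_edge_def)

lemma DD_edge_has_chain_end: "DD_edge t u v \<Longrightarrow> (\<exists>i. u = Ch i) \<or> (\<exists>j. v = Ch j)"
  by (auto simp: DD_edge_def DD_edge0_def)

lemma DD_edge_ChD:
  "DD_edge t (Ch i) (Ch j) \<Longrightarrow> \<exists>k\<in>{1..t}. (i = k - 1 \<and> j = k) \<or> (i = k \<and> j = k - 1)"
  by (auto simp: DD_edge_def DD_edge0_def)

lemma DD_common_neighbour:
  assumes "k \<in> {1..t}" "DD_edge t (Ch (k - 1)) z" "DD_edge t (Ch k) z"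
  shows "z = Tp k \<or> (k = 1 \<and> z = Y) \<or> (k = t \<and> z = X)"
  using assms by (cases z) (auto simp: DD_edge_def DD_edge0_def)

definition contains_DD_triangle :: "nat \<Rightarrow> ddv set \<Rightarrow> nat \<Rightarrow> bool" where
  "contains_DD_triangle t K k \<longleftrightarrow> k \<in> {1..t} \<and> Ch (k - 1) \<in> K \<and> Ch k \<in> K
     \<and> (Tp k \<in> K \<or> (k = 1 \<and> Y \<in> K) \<or> (k = t \<and> X \<in> K))"

lemma DD_triangle:
  assumes "has_triangle (DD_edge t) K"
  shows "\<exists>k. contains_DD_triangle t K k"
proof -
  have chain_edge: "?thesis" if tri: "Ch i \<in> K" "Ch j \<in> K" "z \<in> K"
    "DD_edge t (Ch i) (Ch j)" "DD_edge t (Ch i) z" "DD_edge t (Ch j) z" for i j z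
  proof -
    obtain k where k: "k \<in> {1..t}" "(i = k - 1 \<and> j = k) \<or> (i = k \<and> j = k - 1)"
      using DD_edge_ChD[OF tri(4)] by blast
    then have "DD_edge t (Ch (k - 1)) z" "DD_edge t (Ch k) z" "Ch (k - 1) \<in> K" "Ch k \<in> K"
      using tri by auto
    then show ?thesis
      using DD_common_neighbour[OF k(1)] k(1) tri(3) unfolding contains_DD_triangle_def by blast
  qed
  obtain a b c where abc: "a \<in> K" "b \<in> K" "c \<in> K"
    and edges: "DD_edge t a b" "DD_edge t b c" "DD_edge t a c"
    using assms unfolding has_triangle_def by blast
  consider i j where "a = Ch i" "b = Ch j" | i j where "a = Ch i" "c = Ch j"
    | i j where "b = Ch i" "c = Ch j"
    using DD_edge_has_chain_end[OF edges(1)] DD_edge_has_chain_end[OF edges(2)]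
      DD_edge_has_chain_end[OF edges(3)] by blast
  then show ?thesis
  proof cases
    case 1
    then show ?thesis using chain_edge[of i j c] abc edges by simp
  next
    case 2
    then show ?thesis using chain_edge[of i j b] abc edges DD_edge_sym by simp
  next
    case 3
    then show ?thesis using chain_edge[of i j a] abc edges DD_edge_sym by simp
  qed
qed

fun DD_reflect :: "nat \<Rightarrow> ddv \<Rightarrow> ddv" where
  "DD_reflect t (Ch i) = Ch (t - i)"
| "DD_reflect t (Tp i) = Tp (Suc t - i)"
| "DD_reflect t X = Y"
| "DD_reflect t Y = X"

lemma DD_reflect_in_verts: "v \<in> DD_verts t \<Longrightarrow> DD_reflect t v \<in> DD_verts t"
  by (cases v) (auto simp: DD_verts_def image_iff)

lemma DD_reflect_reflect: "v \<in> DD_verts t \<Longrightarrow> DD_reflect t (DD_reflect t v) = v"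
  by (cases v) (auto simp: DD_verts_def)

lemma DD_edge0_reflect:
  assumes "DD_edge0 t u v"
  shows "DD_edge t (DD_reflect t u) (DD_reflect t v)"
proof -
  consider (chain) i where "i \<in> {1..t}"
      "(u = Ch (i - 1) \<and> v = Tp i) \<or> (u = Tp i \<and> v = Ch i) \<or> (u = Ch (i - 1) \<and> v = Ch i)"
    | (Y) "u = Y" "v = Ch 0 \<or> v = Ch 1"
    | (X) "u = X" "v = Ch (t - 1) \<or> v = Ch t"
    using assms unfolding DD_edge0_def by blast
  then show ?thesis
  proof cases
    case (chain i)
    define k where "k = Suc t - i"
    have k: "k \<in> {1..t}" "t - (i - 1) = k" "t - i = k - 1" "Suc t - i = k"
      using chain(1) by (auto simp: k_def)
    from chain(2) show ?thesis
    proof (elim disjE conjE)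
      assume "u = Ch (i - 1)" "v = Tp i"
      then show ?thesis using k by (auto simp: DD_edge_def DD_edge0_def)
    next
      assume "u = Tp i" "v = Ch i"
      then show ?thesis using k by (auto simp: DD_edge_def DD_edge0_def)
    next
      assume "u = Ch (i - 1)" "v = Ch i"
      then show ?thesis using k by (auto simp: DD_edge_def DD_edge0_def)
    qed
  next
    case Y
    then show ?thesis by (auto simp: DD_edge_def DD_edge0_def)
  next
    case X
    moreover have "t - (t - 1) = 0 \<or> t - (t - 1) = 1" by linarith
    ultimately show ?thesis by (auto simp: DD_edge_def DD_edge0_def)
  qed
qed

lemma DD_edge_reflect: "DD_edge t u v \<Longrightarrow> DD_edge t (DD_reflect t u) (DD_reflect t v)"
  using DD_edge0_reflect DD_edge_sym unfolding DD_edge_def by blast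

lemma DD_edge_reflect_iff:
  assumes "u \<in> DD_verts t" "v \<in> DD_verts t"
  shows "DD_edge t (DD_reflect t u) (DD_reflect t v) \<longleftrightarrow> DD_edge t u v"
  using DD_edge_reflect[of t "DD_reflect t u" "DD_reflect t v"] DD_edge_reflect[of t u v]
  by (auto simp: DD_reflect_reflect assms)

lemma DD_reflect_inj: "inj_on (DD_reflect t) (DD_verts t)"
  by (metis DD_reflect_reflect inj_on_inverseI)

lemma DD_reflect_verts: "DD_reflect t ` DD_verts t = DD_verts t"
  using DD_reflect_in_verts DD_reflect_reflect by (metis image_subsetI subset_antisym image_eqI subsetI)

lemma waiter_wins_DD_after_Y:
  assumes "0 < t"
  shows "waiter_wins (DD_edge t) {Y} (DD_verts t - {X, Y})"
proof -
  define ps where "ps = (Ch 0, Ch 1) # map (\<lambda>k. (Tp k, Ch k)) [2..<Suc t]"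
  have "disjoint_pairs ps"
    using disjoint_pairs_map[of "[2..<Suc t]" Tp Ch]
    by (auto simp: ps_def pair_vertices_map inj_def)
  have pairs: "pair_vertices ps = DD_verts t - {X, Y, Tp 1}"
    using assms by (auto simp: ps_def pair_vertices_map DD_verts_def image_iff)
  have "waiter_wins (DD_edge t) {Tp 1, Y} (pair_vertices ps)"
  proof (rule waiter_wins_pairing[OF \<open>disjoint_pairs ps\<close>], rule notI)
    fix S assume S: "transversal ps S" and "has_triangle (DD_edge t) ({Tp 1, Y} \<union> S)"
    then obtain k where k: "k \<in> {1..t}" and ch: "Ch (k - 1) \<in> S" "Ch k \<in> S"
      and apex: "Tp k \<in> {Tp 1, Y} \<union> S \<or> k = 1 \<or> (k = t \<and> X \<in> S)"
      using DD_triangle unfolding contains_DD_triangle_def by fastforce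
    have "X \<notin> S" using S pairs by (auto simp: transversal_def)
    moreover have "Ch 0 \<in> S \<longleftrightarrow> Ch 1 \<notin> S"
      using S by (simp add: transversal_def ps_def)
    moreover have "Tp k \<in> S \<longleftrightarrow> Ch k \<notin> S" if "2 \<le> k"
    proof -
      have "(Tp k, Ch k) \<in> set ps" using k that by (auto simp: ps_def simp del: upt_Suc)
      then show ?thesis using S by (auto simp: transversal_def)
    qed
    ultimately show False
      using k ch apex by (cases "k = 1") auto
  qed
  moreover have "Tp 1 \<in> DD_verts t - {X, Y}"
    using assms by (simp add: DD_verts_def)
  ultimately show ?thesis
    using waiter_wins.offer_one[of "Tp 1" "DD_verts t - {X, Y}" "DD_edge t" "{Y}"] pairs
    by (simp add: insert_commute set_diff_eq)
qed

lemma waiter_wins_DD_after_X: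
  assumes "0 < t"
  shows "waiter_wins (DD_edge t) {X} (DD_verts t - {X, Y})"
proof -
  have sub: "{Y} \<union> (DD_verts t - {X, Y}) \<subseteq> DD_verts t"
    by (auto simp: DD_verts_def)
  have "waiter_wins (DD_edge t) (DD_reflect t ` {Y}) (DD_reflect t ` (DD_verts t - {X, Y}))"
    using waiter_wins_image[OF waiter_wins_DD_after_Y[OF assms] inj_on_subset[OF DD_reflect_inj sub]]
      DD_edge_reflect_iff sub by blast
  moreover have "DD_reflect t ` (DD_verts t - {X, Y}) = DD_verts t - {X, Y}"
  proof -
    have "{X, Y} \<subseteq> DD_verts t" by (simp add: DD_verts_def)
    then show ?thesis
      using inj_on_image_set_diff[OF DD_reflect_inj[of t], of "DD_verts t" "{X, Y}"]
      by (simp add: DD_reflect_verts insert_commute)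
  qed
  ultimately show ?thesis by simp
qed

theorem mainTheorem16:
  fixes t :: nat
  assumes "t \<ge> 2"
  shows "waiter_wins_game (DD_verts t) (DD_edge t)"
  unfolding waiter_wins_game_def
proof (rule waiter_wins.offer_two[of X _ Y])
  show "waiter_wins (DD_edge t) {X} (DD_verts t - {X, Y})"
    and "waiter_wins (DD_edge t) {Y} (DD_verts t - {X, Y})"
    using assms waiter_wins_DD_after_X waiter_wins_DD_after_Y by simp_all
qed (auto simp: DD_verts_def)

end
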